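(* Let $\varkappa_+,\varkappa_-$ be nonnegative integers with $N=\varkappa_++\varkappa_-\ge1$, and let $x\in\mathbb{C}\setminus\mathbb{Z}$. Then $$\sum_{(c'_1,\dots,c'_N)}\ \prod_{i=1}^{N}\frac{1}{x+c'_i}=\frac{\binom{\varkappa_++\varkappa_-}{\varkappa_+}}{\prod_{i=1}^{\varkappa_+}(x+i)\prod_{j=1}^{\varkappa_-}(x-j)},$$ where the sum runs over all integer sequences $(c'_1,\dots,c'_N)$ such that, with $c'_0=0$, $|c'_{i+1}-c'_i|=1$ for $i=0,\dots,N-1$ and $c'_N=\varkappa_+-\varkappa_-$. *)

theory Defs
  imports Complex_Main
begin

definition lattice_paths :: "nat \<Rightarrow> int \<Rightarrow> int list set" where
  "lattice_paths N e = {cs. length cs = N \<and>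
      (\<forall>i<N. \<bar>(0 # cs) ! (Suc i) - (0 # cs) ! i\<bar> = 1) \<and>
      (0 # cs) ! N = e}"

end

theory Submission
  imports Defs
begin

text \<open>Splitting off the last step of a path shows that the sum over paths ending at e satisfies
  S(N+1, e) = (S(N, e-1) + S(N, e+1)) / (x + e).  The right-hand side of the theorem,
  C(p+m, p) / ((x+1)...(x+p) (x-1)...(x-m)), obeys the same recursion
  with the same boundary values, because Pascal's rule and
  (p+1) C(p+m+1, p+1) = (m+1) C(p+m+1, p) make the two summands combine into a multiple of
  x + (p+1) - (m+1).\<close>

lemma snoc_mem_lattice_paths_iff:
  "ds @ [y] \<in> lattice_paths (Suc N) e \<longleftrightarrow>
     y = e \<and> (ds \<in> lattice_paths N (e - 1) \<or> ds \<in> lattice_paths N (e + 1))"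
proof (cases "length ds = N")
  case True
  have prefix: "(0 # ds @ [y]) ! i = (0 # ds) ! i" if "i \<le> N" for i
    using that True by (cases i) (auto simp: nth_append)
  have last: "(0 # ds @ [y]) ! Suc N = y"
    using True by (simp add: nth_append)
  have "(\<forall>i<Suc N. \<bar>(0 # ds @ [y]) ! Suc i - (0 # ds @ [y]) ! i\<bar> = 1) \<longleftrightarrow>
      (\<forall>i<N. \<bar>(0 # ds @ [y]) ! Suc i - (0 # ds @ [y]) ! i\<bar> = 1) \<and>
      \<bar>(0 # ds @ [y]) ! Suc N - (0 # ds @ [y]) ! N\<bar> = 1"
    by (auto simp del: nth_Cons_Suc elim: less_SucE)
  also have "\<dots> \<longleftrightarrow>
      (\<forall>i<N. \<bar>(0 # ds) ! Suc i - (0 # ds) ! i\<bar> = 1) \<and> \<bar>y - (0 # ds) ! N\<bar> = 1"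
    by (simp only: prefix last Suc_leI less_imp_le order_refl simp_thms cong: imp_cong)
  finally have steps: "(\<forall>i<Suc N. \<bar>(0 # ds @ [y]) ! Suc i - (0 # ds @ [y]) ! i\<bar> = 1) \<longleftrightarrow>
      (\<forall>i<N. \<bar>(0 # ds) ! Suc i - (0 # ds) ! i\<bar> = 1) \<and> \<bar>y - (0 # ds) ! N\<bar> = 1" .
  show ?thesis
    unfolding lattice_paths_def mem_Collect_eq steps last using True by auto
qed (auto simp: lattice_paths_def)

lemma lattice_paths_Suc:
  "lattice_paths (Suc N) e =
     (\<lambda>ds. ds @ [e]) ` (lattice_paths N (e - 1) \<union> lattice_paths N (e + 1))"
proof (intro equalityI subsetI)
  fix cs assume cs: "cs \<in> lattice_paths (Suc N) e"
  then have "cs \<noteq> []" by (auto simp: lattice_paths_def)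
  then obtain ds y where "cs = ds @ [y]" by (metis rev_exhaust)
  with cs show "cs \<in> (\<lambda>ds. ds @ [e]) ` (lattice_paths N (e - 1) \<union> lattice_paths N (e + 1))"
    by (auto simp: snoc_mem_lattice_paths_iff)
qed (auto simp: snoc_mem_lattice_paths_iff)

lemma lattice_paths_0: "lattice_paths 0 e = (if e = 0 then {[]} else {})"
  by (auto simp: lattice_paths_def)

lemma finite_lattice_paths: "finite (lattice_paths N e)"
  by (induction N arbitrary: e) (simp_all add: lattice_paths_0 lattice_paths_Suc)

lemma lattice_paths_eq_empty: "int N < \<bar>e\<bar> \<Longrightarrow> lattice_paths N e = {}"
  by (induction N arbitrary: e) (simp_all add: lattice_paths_0 lattice_paths_Suc)

definition path_sum :: "'a::field \<Rightarrow> nat \<Rightarrow> int \<Rightarrow> 'a" where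
  "path_sum x N e = (\<Sum>cs\<in>lattice_paths N e. \<Prod>i<N. 1 / (x + of_int (cs ! i)))"

lemma path_sum_0: "path_sum x 0 e = (if e = 0 then 1 else 0)"
  by (simp add: path_sum_def lattice_paths_0)

lemma path_sum_eq_0: "int N < \<bar>e\<bar> \<Longrightarrow> path_sum x N e = 0"
  by (simp add: path_sum_def lattice_paths_eq_empty)

lemma path_sum_Suc:
  "path_sum x (Suc N) e = (path_sum x N (e - 1) + path_sum x N (e + 1)) / (x + of_int e)"
proof -
  let ?w = "\<lambda>n cs. \<Prod>i<n. 1 / (x + of_int (cs ! i))"
  let ?L = "lattice_paths N (e - 1)" and ?R = "lattice_paths N (e + 1)"
  have disjoint: "?L \<inter> ?R = {}"
    by (auto simp: lattice_paths_def)
  have weight_snoc: "?w (Suc N) (ds @ [e]) = ?w N ds / (x + of_int e)" if "ds \<in> ?L \<union> ?R" for ds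
  proof -
    have len: "length ds = N" using that by (auto simp: lattice_paths_def)
    have "?w N (ds @ [e]) = ?w N ds"
      by (rule prod.cong) (auto simp: nth_append len)
    then show ?thesis by (simp add: len nth_append)
  qed
  have "path_sum x (Suc N) e = (\<Sum>ds\<in>?L \<union> ?R. ?w (Suc N) (ds @ [e]))"
    unfolding path_sum_def lattice_paths_Suc by (subst sum.reindex) (auto simp: inj_on_def)
  also have "\<dots> = (\<Sum>ds\<in>?L \<union> ?R. ?w N ds / (x + of_int e))"
    by (rule sum.cong[OF refl weight_snoc])
  also have "\<dots> = (path_sum x N (e - 1) + path_sum x N (e + 1)) / (x + of_int e)"
    by (simp add: path_sum_def sum_divide_distrib add_divide_distrib sum.union_disjoint
        finite_lattice_paths disjoint)
  finally show ?thesis .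
qed

lemma path_sum_Suc_nat:
  "path_sum x (Suc N) (int p - int m) =
     (path_sum x N (int p - int (Suc m)) + path_sum x N (int (Suc p) - int m))
       / (x + of_nat p - of_nat m)"
proof -
  have "int p - int m - 1 = int p - int (Suc m)" "int p - int m + 1 = int (Suc p) - int m"
    by simp_all
  then show ?thesis
    by (simp only: path_sum_Suc of_int_diff of_int_of_nat_eq add_diff_eq)
qed

definition binomial_quotient :: "'a::field \<Rightarrow> nat \<Rightarrow> nat \<Rightarrow> 'a" where
  "binomial_quotient x p m =
     of_nat ((p + m) choose p) / ((\<Prod>i=1..p. x + of_nat i) * (\<Prod>j=1..m. x - of_nat j))"

lemma binomial_quotient_Suc_0:
  "binomial_quotient x (Suc p) 0 = binomial_quotient x p 0 / (x + of_nat (Suc p))"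
  by (simp add: binomial_quotient_def prod.nat_ivl_Suc')

lemma binomial_quotient_0_Suc:
  "binomial_quotient x 0 (Suc m) = binomial_quotient x 0 m / (x - of_nat (Suc m))"
  by (simp add: binomial_quotient_def prod.nat_ivl_Suc')

context
  fixes x :: "'a::field"
  assumes avoids_integers: "\<And>k. x + of_int k \<noteq> 0"
begin

lemma shifted_nonzero: "x + of_nat i \<noteq> 0" "x - of_nat j \<noteq> 0"
  using avoids_integers[of "int i"] avoids_integers[of "- int j"] by simp_all

lemma binomial_quotient_Suc_Suc:
  "binomial_quotient x (Suc p) (Suc m) =
     (binomial_quotient x p (Suc m) + binomial_quotient x (Suc p) m)
       / (x + of_nat (Suc p) - of_nat (Suc m))"
proof -
  define P where "P = (\<Prod>i=1..p. x + of_nat i)"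
  define M where "M = (\<Prod>j=1..m. x - of_nat j)"
  define a :: 'a where "a = of_nat (Suc (p + m) choose p)"
  define b :: 'a where "b = of_nat (Suc (p + m) choose Suc p)"
  let ?u = "x + of_nat (Suc p)" and ?v = "x - of_nat (Suc m)"
  have left: "binomial_quotient x p (Suc m) = a / (P * (M * ?v))"
    by (simp add: binomial_quotient_def prod.nat_ivl_Suc' P_def M_def a_def)
  have right: "binomial_quotient x (Suc p) m = b / (P * ?u * M)"
    by (simp add: binomial_quotient_def prod.nat_ivl_Suc' P_def M_def b_def add.commute[of m])
  have whole: "binomial_quotient x (Suc p) (Suc m) = (a + b) / (P * ?u * (M * ?v))"
    by (simp add: binomial_quotient_def prod.nat_ivl_Suc' P_def M_def a_def b_def)
  have nonzero: "P \<noteq> 0" "M \<noteq> 0" "?u \<noteq> 0" "?v \<noteq> 0" "?u - of_nat (Suc m) \<noteq> 0"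
    using shifted_nonzero shifted_nonzero(2)[unfolded right_minus_eq]
      avoids_integers[of "int (Suc p) - int (Suc m)"]
    by (auto simp: P_def M_def prod_zero_iff add_diff_eq simp del: of_nat_Suc)
  have absorption: "of_nat (Suc p) * b = of_nat (Suc m) * a"
    unfolding a_def b_def of_nat_mult[symmetric] by (rule arg_cong[OF Suc_times_binomial_add])
  have numerator: "a * ?u + b * ?v = (a + b) * (?u - of_nat (Suc m))"
    using absorption by (simp add: algebra_simps)
  have "binomial_quotient x p (Suc m) + binomial_quotient x (Suc p) m
        = (a * ?u + b * ?v) / (P * ?u * (M * ?v))"
    unfolding left right using nonzero by (simp add: divide_simps)
  also have "\<dots> = binomial_quotient x (Suc p) (Suc m) * (?u - of_nat (Suc m))"
    unfolding numerator whole by simp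
  finally show ?thesis
    using nonzero(5) by simp
qed

lemma path_sum_eq_binomial_quotient:
  "path_sum x (p + m) (int p - int m) = binomial_quotient x p m"
proof (induction "p + m" arbitrary: p m)
  case 0
  then show ?case by (simp add: path_sum_0 binomial_quotient_def)
next
  case (Suc N)
  have IH: "path_sum x N (int p' - int m') = binomial_quotient x p' m'" if "p' + m' = N" for p' m'
    using Suc.hyps(1) that by blast
  consider "p = 0" "m = Suc N" | "p = Suc N" "m = 0"
    | p' m' where "p = Suc p'" "m = Suc m'" "p' + Suc m' = N"
    using Suc.hyps(2) by (cases p; cases m) auto
  then show ?case
  proof cases
    case 1
    then show ?thesis
      using path_sum_Suc_nat[of x N 0 "Suc N"] IH[of 0 N] path_sum_eq_0[of N "- int (Suc (Suc N))" x]
      by (simp add: binomial_quotient_0_Suc)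
  next
    case 2
    then show ?thesis
      using path_sum_Suc_nat[of x N "Suc N" 0] IH[of N 0] path_sum_eq_0[of N "int (Suc (Suc N))" x]
      by (simp add: binomial_quotient_Suc_0)
  next
    case 3
    have shifts: "int p - int (Suc m) = int p' - int m" "int (Suc p) - int m = int p - int m'"
      using 3 by simp_all
    have left: "path_sum x N (int p - int (Suc m)) = binomial_quotient x p' m"
      and right: "path_sum x N (int (Suc p) - int m) = binomial_quotient x p m'"
      unfolding shifts using 3 by (intro IH; simp)+
    have "path_sum x (p + m) (int p - int m) =
        (path_sum x N (int p - int (Suc m)) + path_sum x N (int (Suc p) - int m))
          / (x + of_nat p - of_nat m)"
      unfolding Suc.hyps(2)[symmetric] by (rule path_sum_Suc_nat)
    also have "\<dots> = binomial_quotient x p m"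
      unfolding left right using binomial_quotient_Suc_Suc[of p' m'] 3 by simp
    finally show ?thesis .
  qed
qed

end

theorem mainTheorem11:
  fixes kp km :: nat and x :: complex
  assumes "kp + km \<ge> 1"
    and "x \<notin> \<int>"
  shows "(\<Sum>cs\<in>lattice_paths (kp + km) (int kp - int km).
            \<Prod>i<kp + km. 1 / (x + of_int (cs ! i)))
         = of_nat ((kp + km) choose kp)
           / ((\<Prod>i=1..kp. (x + of_nat i)) * (\<Prod>j=1..km. (x - of_nat j)))"
proof -
  have "x + of_int k \<noteq> 0" for k
  proof
    assume "x + of_int k = 0"
    then have "x = of_int (- k)" by (simp add: eq_neg_iff_add_eq_0)
    with \<open>x \<notin> \<int>\<close> show False by auto
  qed
  from path_sum_eq_binomial_quotient[OF this]
  show ?thesis by (simp add: path_sum_def binomial_quotient_def)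
qed

end
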